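(* For every positive integer $n$, the uniqueness property fails for the triple graph $\mathcal{T}_n$: there exist two vertices of $\mathcal{T}_n$ whose triples of integers have the same largest element but are not equal (not even up to permutation of their entries). More precisely, for every $j\ge 1$ the graph $\mathcal{T}_n$ contains vertices labelled \[ \Big(\breve K(S_n(0)),\ \breve K\big(S_n(0)^{5j+1}S_n(1)\big),\ \breve K\big(S_n(0)^{5j}S_n(1)\big)\Big) \quad\text{and}\quad \Big(\breve K\big(S_n(0)S_n(1)^{3j}\big),\ \breve K\big(S_n(0)S_n(1)^{3j+1}\big),\ \breve K(S_n(1))\Big), \] these two triples have equal largest element, and they are distinct triples.
   Context: For finite sequences of positive integers $\alpha=(a_1,\dots,a_k)$, $\beta=(b_1,\dots,b_m)$, the concatenation is $\alpha\beta=\alpha\oplus\beta=(a_1,\dots,a_k,b_1,\dots,b_m)$, and $\alpha^k$ denotes the concatenation of $k$ copies of $\alpha$. The continued fraction $[a_1;a_2:\dots:a_k]$ means $a_1+\cfrac{1}{a_2+\cfrac{1}{\ddots+\cfrac{1}{a_k}}}$. For a sequence $(a_1,\dots,a_k)$ of positive integers with $k\ge2$, the integer sine $\breve K(a_1,\dots,a_k)$ is the integer $c$ where $[a_1;a_2:\dots:a_{k-1}]=c/d$ with $\gcd(c,d)=1$, $c,d>0$ (note the last entry $a_k$ is omitted). On triples $(\alpha,\gamma,\beta)$ of finite sequences define $\mathcal L(\alpha,\gamma,\beta)=(\alpha,\alpha\gamma,\gamma)$ and $\mathcal R(\alpha,\gamma,\beta)=(\gamma,\gamma\beta,\beta)$.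 The graph $\mathcal G(\alpha,\beta)$ is the binary graph with root $(\alpha,\alpha\beta,\beta)$ whose vertices are all triples obtained from the root by finitely many applications of $\mathcal L,\mathcal R$, with an edge $(v,w)$ whenever $w=\mathcal L(v)$ or $w=\mathcal R(v)$. The triple graph of integers $X(\mathcal G(\alpha,\beta))$ is obtained by replacing each vertex $(\alpha',\gamma',\beta')$ by the integer triple $\chi(\alpha',\gamma',\beta')=(\breve K(\alpha'),\breve K(\gamma'),\breve K(\beta'))$ (and each edge $(v,w)$ by $(\chi(v),\chi(w))$). For a positive integer $n$ let $a_n=n^2+3$, $b_n=n^4+5n^2+5$, $S_n(0)=(na_n,na_n)$, $S_n(1)=(nb_n,nb_n)$, and $\mathcal T_n=X(\mathcal G(S_n(0),S_n(1)))$. *)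

theory Defs
  imports Complex_Main "HOL-Library.Multiset"
begin

fun cfrac :: "nat list \<Rightarrow> rat" where
  "cfrac [] = 0"
| "cfrac [a] = of_nat a"
| "cfrac (a # b # xs) = of_nat a + 1 / cfrac (b # xs)"

text \<open>Integer sine: numerator (in lowest terms, positive denominator) of the continued
fraction of the sequence with its last entry omitted (meaningful for length >= 2).\<close>
definition isin :: "nat list \<Rightarrow> int" where
  "isin xs = fst (quotient_of (cfrac (butlast xs)))"

type_synonym seqtriple = "nat list \<times> nat list \<times> nat list"

definition opL :: "seqtriple \<Rightarrow> seqtriple" where
  "opL t = (case t of (\<alpha>, \<gamma>, \<beta>) \<Rightarrow> (\<alpha>, \<alpha> @ \<gamma>, \<gamma>))"

definition opR :: "seqtriple \<Rightarrow> seqtriple" where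
  "opR t = (case t of (\<alpha>, \<gamma>, \<beta>) \<Rightarrow> (\<gamma>, \<gamma> @ \<beta>, \<beta>))"

inductive_set Gverts :: "nat list \<Rightarrow> nat list \<Rightarrow> seqtriple set" for \<alpha> \<beta> where
  root: "(\<alpha>, \<alpha> @ \<beta>, \<beta>) \<in> Gverts \<alpha> \<beta>"
| stepL: "v \<in> Gverts \<alpha> \<beta> \<Longrightarrow> opL v \<in> Gverts \<alpha> \<beta>"
| stepR: "v \<in> Gverts \<alpha> \<beta> \<Longrightarrow> opR v \<in> Gverts \<alpha> \<beta>"

definition chi :: "seqtriple \<Rightarrow> int \<times> int \<times> int" where
  "chi t = (case t of (\<alpha>, \<gamma>, \<beta>) \<Rightarrow> (isin \<alpha>, isin \<gamma>, isin \<beta>))"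

definition triple_graph_verts :: "nat list \<Rightarrow> nat list \<Rightarrow> (int \<times> int \<times> int) set" where
  "triple_graph_verts \<alpha> \<beta> = chi ` Gverts \<alpha> \<beta>"

definition lpow :: "nat list \<Rightarrow> nat \<Rightarrow> nat list" where
  "lpow xs k = concat (replicate k xs)"

definition an :: "nat \<Rightarrow> nat" where "an n = n^2 + 3"
definition bn :: "nat \<Rightarrow> nat" where "bn n = n^4 + 5*n^2 + 5"
definition S0 :: "nat \<Rightarrow> nat list" where "S0 n = [n * an n, n * an n]"
definition S1 :: "nat \<Rightarrow> nat list" where "S1 n = [n * bn n, n * bn n]"

definition T :: "nat \<Rightarrow> (int \<times> int \<times> int) set" where
  "T n = triple_graph_verts (S0 n) (S1 n)"

definition tmax :: "int \<times> int \<times> int \<Rightarrow> int" where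
  "tmax t = (case t of (a, b, c) \<Rightarrow> max a (max b c))"

definition tmset :: "int \<times> int \<times> int \<Rightarrow> int multiset" where
  "tmset t = (case t of (a, b, c) \<Rightarrow> {#a, b, c#})"

end

theory Submission imports Defs begin

text \<open>Writing s = n a_n and t = n b_n, every entry of the two triples is a continuant of
a word in s and t, and blocks of equal letters are evaluated by Fibonacci polynomials F_k(x).
With x = n, the letters s = x^3 + 3x and t = x^5 + 5x^3 + 5x are the Lucas polynomials L_3(x)
and L_5(x), so F_k(s) = F_{3k}(x)/F_3(x) and F_k(t) = F_{5k}(x)/F_5(x). Both largest entries
thus become explicit combinations of the F_{30j+m}(x), and a polynomial identity shows they
agree. The triples still differ: s occurs in the first but lies strictly below every entry of
the second.\<close>

fun continuant :: "nat list \<Rightarrow> int" where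
  "continuant [] = 1"
| "continuant [a] = int a"
| "continuant (a # b # xs) = int a * continuant (b # xs) + continuant xs"

lemma continuant_pos: "\<forall>x\<in>set xs. 0 < x \<Longrightarrow> 0 < continuant xs"
  by (induction xs rule: continuant.induct) (auto simp: add_pos_pos)

lemma coprime_continuant_Cons: "coprime (continuant (a # xs)) (continuant xs)"
proof (induction xs arbitrary: a)
  case (Cons b xs)
  then have "coprime (continuant (b # xs)) (int a * continuant (b # xs) + continuant xs)"
    by (simp add: coprime_iff_gcd_eq_1 gcd_add_mult gcd.commute coprime_commute)
  then show ?case by (simp add: coprime_commute)
qed simp

lemma cfrac_eq_continuant_quotient:
  "xs \<noteq> [] \<Longrightarrow> \<forall>x\<in>set xs. 0 < x \<Longrightarrow>
    cfrac xs = of_int (continuant xs) / of_int (continuant (tl xs))"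
proof (induction xs rule: cfrac.induct)
  case (3 a b xs)
  have "0 < continuant (b # xs)" using 3 by (intro continuant_pos) auto
  with 3 show ?case by (simp add: field_simps)
qed auto

lemma quotient_of_cfrac:
  assumes "xs \<noteq> []" and "\<forall>x\<in>set xs. 0 < x"
  shows "quotient_of (cfrac xs) = (continuant xs, continuant (tl xs))"
proof -
  obtain y ys where xs: "xs = y # ys" using assms(1) by (cases xs) auto
  have "0 < continuant ys" using assms xs by (intro continuant_pos) auto
  moreover have "coprime (continuant xs) (continuant ys)"
    using coprime_continuant_Cons xs by simp
  moreover have "cfrac xs = Fract (continuant xs) (continuant ys)"
    using cfrac_eq_continuant_quotient[OF assms] xs \<open>0 < continuant ys\<close>
    by (simp add: Fract_of_int_quotient)
  ultimately show ?thesis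
    using xs by (simp add: quotient_of_Fract normalize_def coprime_iff_gcd_eq_1)
qed

lemma isin_eq_continuant:
  "butlast xs \<noteq> [] \<Longrightarrow> \<forall>x\<in>set (butlast xs). 0 < x \<Longrightarrow> isin xs = continuant (butlast xs)"
  unfolding isin_def by (simp add: quotient_of_cfrac)

lemma continuant_append_two:
  "continuant (xs @ [a, b]) = int b * continuant (xs @ [a]) + continuant xs"
  by (induction xs rule: continuant.induct) (simp_all add: algebra_simps)

lemma continuant_rev: "continuant (rev xs) = continuant xs"
  by (induction xs rule: continuant.induct) (simp_all add: continuant_append_two)

lemma continuant_le_Cons:
  assumes "0 < a" and "\<forall>x\<in>set xs. 0 < x"
  shows "continuant xs \<le> continuant (a # xs)"
proof (cases xs)
  case (Cons b ys)
  have "0 < continuant xs" and "0 < continuant ys"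
    using assms Cons by (auto intro!: continuant_pos)
  moreover from this(1) have "continuant xs \<le> int a * continuant xs"
    using assms(1) by simp
  ultimately show ?thesis unfolding Cons by (simp only: continuant.simps)
qed (use assms in simp)

lemma continuant_le_snoc:
  "0 < a \<Longrightarrow> \<forall>x\<in>set xs. 0 < x \<Longrightarrow> continuant xs \<le> continuant (xs @ [a])"
  using continuant_le_Cons[of a "rev xs"] continuant_rev[of "xs @ [a]"] continuant_rev[of xs]
  by simp

lemma hd_less_continuant:
  assumes "0 < b" and "\<forall>x\<in>set xs. 0 < x"
  shows "int a < continuant (a # b # xs)"
proof -
  have "0 < continuant (b # xs)" and "0 < continuant xs"
    using assms by (auto intro!: continuant_pos simp del: continuant.simps)
  moreover from this(1) have "int a * 1 \<le> int a * continuant (b # xs)"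
    by (intro mult_left_mono) auto
  ultimately show ?thesis by simp
qed

lemma last_less_continuant:
  "0 < a \<Longrightarrow> \<forall>x\<in>set xs. 0 < x \<Longrightarrow> int b < continuant (xs @ [a, b])"
  using hd_less_continuant[of a "rev xs" b] continuant_rev[of "xs @ [a, b]"] by auto

fun fib_poly :: "int \<Rightarrow> nat \<Rightarrow> int" where
  "fib_poly x 0 = 0"
| "fib_poly x (Suc 0) = 1"
| "fib_poly x (Suc (Suc k)) = x * fib_poly x (Suc k) + fib_poly x k"

lemma continuant_replicate: "continuant (replicate k a) = fib_poly (int a) (Suc k)"
  by (induction k rule: induct_nat_012) simp_all

lemma fib_poly_add:
  "fib_poly x (m + Suc k) = fib_poly x (Suc k) * fib_poly x (Suc m) + fib_poly x k * fib_poly x m"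
proof (induction k rule: induct_nat_012)
  case (ge2 k)
  have "fib_poly x (m + Suc (Suc (Suc k)))
      = x * fib_poly x (m + Suc (Suc k)) + fib_poly x (m + Suc k)"
    by (simp add: add.commute)
  then show ?case by (simp only: ge2 fib_poly.simps algebra_simps)
qed simp_all

lemma fib_poly_eq_recurrence:
  assumes "u 0 = 0" and "\<And>k. u (Suc (Suc k)) = c * u (Suc k) + u k"
  shows "u k = u 1 * fib_poly c k"
  by (induction k rule: induct_nat_012) (simp_all add: assms algebra_simps)

lemma fib_poly_values:
  "fib_poly x 3 = x^2 + 1" "fib_poly x 4 = x^3 + 2*x" "fib_poly x 5 = x^4 + 3*x^2 + 1"
  "fib_poly x 6 = x^5 + 4*x^3 + 3*x" "fib_poly x 8 = x^7 + 6*x^5 + 10*x^3 + 4*x"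
  "fib_poly x 9 = x^8 + 7*x^6 + 15*x^4 + 10*x^2 + 1"
  "fib_poly x 10 = x^9 + 8*x^7 + 21*x^5 + 20*x^3 + 5*x"
  by (simp_all add: eval_nat_numeral algebra_simps power2_eq_square power3_eq_cube
      power_numeral_reduce)

lemma fib_poly_add_6: "fib_poly x (m + 6) = x * (x^2 + 3) * fib_poly x (m + 3) + fib_poly x m"
  using fib_poly_add[of x m 5] fib_poly_add[of x m 2]
  by (simp add: eval_nat_numeral fib_poly_values algebra_simps power2_eq_square power3_eq_cube
      power_numeral_reduce)

lemma fib_poly_add_10:
  "fib_poly x (m + 10) = x * (x^4 + 5*x^2 + 5) * fib_poly x (m + 5) + fib_poly x m"
  using fib_poly_add[of x m 9] fib_poly_add[of x m 4]
  by (simp add: eval_nat_numeral fib_poly_values algebra_simps power2_eq_square power3_eq_cube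
      power_numeral_reduce)

lemma fib_poly_mult_3: "fib_poly x (3 * k) = fib_poly x 3 * fib_poly (x * (x^2 + 3)) k"
proof -
  have "fib_poly x (3 * Suc (Suc i)) = x * (x^2 + 3) * fib_poly x (3 * Suc i) + fib_poly x (3 * i)"
    for i using fib_poly_add_6[of x "3 * i"] by (simp add: add.commute)
  from fib_poly_eq_recurrence[of "\<lambda>k. fib_poly x (3 * k)" "x * (x^2 + 3)", OF _ this]
  show ?thesis by simp
qed

lemma fib_poly_mult_5: "fib_poly x (5 * k) = fib_poly x 5 * fib_poly (x * (x^4 + 5*x^2 + 5)) k"
proof -
  have "fib_poly x (5 * Suc (Suc i))
      = x * (x^4 + 5*x^2 + 5) * fib_poly x (5 * Suc i) + fib_poly x (5 * i)"
    for i using fib_poly_add_10[of x "5 * i"] by (simp add: add.commute)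
  from fib_poly_eq_recurrence[of "\<lambda>k. fib_poly x (5 * k)" "x * (x^4 + 5*x^2 + 5)", OF _ this]
  show ?thesis by simp
qed

text \<open>Both sides reduce, by the addition formula, to combinations of F_{m+1}(x) and F_m(x).\<close>

lemma fib_poly_identity_3_5:
  fixes x :: int
  defines "s \<equiv> x * (x^2 + 3)" and "t \<equiv> x * (x^4 + 5*x^2 + 5)"
  shows "fib_poly x 5 * (t * fib_poly x (m + 9) + fib_poly x (m + 6))
       = fib_poly x 3 * ((s^2 + 1) * fib_poly x (m + 10) + s * fib_poly x (m + 5))"
  using fib_poly_add[of x m 9] fib_poly_add[of x m 8] fib_poly_add[of x m 5] fib_poly_add[of x m 4]
  by (simp add: eval_nat_numeral fib_poly_values s_def t_def algebra_simps power2_eq_square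
      power3_eq_cube power_numeral_reduce)

lemma continuant_coincidence:
  fixes s t :: nat and x :: int
  assumes s: "int s = x * (x^2 + 3)" and t: "int t = x * (x^4 + 5*x^2 + 5)"
  shows "continuant (replicate (10*j + 2) s @ [t]) = continuant (s # s # replicate (6*j + 1) t)"
    (is "?A = ?D")
proof -
  have "replicate (10*j + 2) s @ [t] = replicate (10*j + 1) s @ [s, t]"
    by (simp add: replicate_append_same[symmetric])
  then have "?A = int t * continuant (replicate (10*j + 1) s @ [s])
      + continuant (replicate (10*j + 1) s)"
    by (simp only: continuant_append_two)
  moreover have "replicate (10*j + 1) s @ [s] = replicate (10*j + 2) s"
    by (simp add: replicate_append_same)
  moreover have "Suc (10*j + 2) = 10*j + 3" and "Suc (10*j + 1) = 10*j + 2"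
    by simp_all
  ultimately have "?A = int t * fib_poly s (10*j + 3) + fib_poly s (10*j + 2)"
    by (simp only: continuant_replicate)
  then have A: "fib_poly x 3 * ?A = int t * fib_poly x (30*j + 9) + fib_poly x (30*j + 6)"
    using fib_poly_mult_3[of x "10*j + 3"] fib_poly_mult_3[of x "10*j + 2"] s
    by (simp add: algebra_simps)
  have "?D = (int s^2 + 1) * continuant (replicate (6*j + 1) t)
      + int s * continuant (replicate (6*j) t)"
    by (simp add: algebra_simps power2_eq_square)
  moreover have "Suc (6*j + 1) = 6*j + 2" and "Suc (6*j) = 6*j + 1"
    by simp_all
  ultimately have "?D = (int s^2 + 1) * fib_poly t (6*j + 2) + int s * fib_poly t (6*j + 1)"
    by (simp only: continuant_replicate)
  then have D: "fib_poly x 5 * ?D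
      = (int s^2 + 1) * fib_poly x (30*j + 10) + int s * fib_poly x (30*j + 5)"
    using fib_poly_mult_5[of x "6*j + 2"] fib_poly_mult_5[of x "6*j + 1"] t
    by (simp add: algebra_simps)
  have "(fib_poly x 3 * fib_poly x 5) * ?A = fib_poly x 5 * (fib_poly x 3 * ?A)"
    by (simp only: ac_simps)
  also have "\<dots> = fib_poly x 3 * (fib_poly x 5 * ?D)"
    unfolding A D using fib_poly_identity_3_5[of x "30*j", folded s t] by (simp add: add.commute)
  also have "\<dots> = (fib_poly x 3 * fib_poly x 5) * ?D"
    by (simp only: ac_simps)
  finally have "(fib_poly x 3 * fib_poly x 5) * ?A = (fib_poly x 3 * fib_poly x 5) * ?D" .
  moreover have "0 < fib_poly x 3 * fib_poly x 5"
    by (simp add: fib_poly_values add_pos_nonneg)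
  ultimately show ?thesis by (metis mult_cancel_left order_less_irrefl)
qed

lemma lpow_Suc: "lpow xs (Suc m) = xs @ lpow xs m"
  by (simp add: lpow_def)

lemma lpow_Suc2: "lpow xs (Suc m) = lpow xs m @ xs"
  by (induction m) (simp_all add: lpow_def)

lemma lpow_pair: "lpow [a, a] m = replicate (2*m) a"
  by (induction m) (simp_all add: lpow_def)

lemma Gverts_opL_chain: "(\<alpha>, lpow \<alpha> (Suc m) @ \<beta>, lpow \<alpha> m @ \<beta>) \<in> Gverts \<alpha> \<beta>"
proof (induction m)
  case 0
  show ?case using Gverts.root by (simp add: lpow_def)
next
  case (Suc m)
  from Gverts.stepL[OF Suc] show ?case by (simp add: opL_def lpow_Suc)
qed

lemma Gverts_opR_chain: "(\<alpha> @ lpow \<beta> m, \<alpha> @ lpow \<beta> (Suc m), \<beta>) \<in> Gverts \<alpha> \<beta>"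
proof (induction m)
  case 0
  show ?case using Gverts.root by (simp add: lpow_def)
next
  case (Suc m)
  from Gverts.stepR[OF Suc] show ?case by (simp add: opR_def lpow_Suc2)
qed

lemma isin_pair: "isin [a, a] = int a"
  by (simp add: isin_def)

lemma isin_lpow_pair_append_pair:
  "0 < a \<Longrightarrow> 0 < b \<Longrightarrow> isin (lpow [a, a] m @ [b, b]) = continuant (replicate (2*m) a @ [b])"
  by (subst isin_eq_continuant) (auto simp: lpow_pair butlast_append)

lemma isin_pair_append_lpow_pair:
  assumes "0 < a" and "0 < b" and "0 < m"
  shows "isin ([a, a] @ lpow [b, b] m) = continuant (a # a # replicate (2*m - 1) b)"
proof -
  have "replicate (2*m) b = replicate (2*m - 1) b @ [b]"
    using assms(3) by (cases m) (simp_all add: replicate_append_same)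
  then have "butlast ([a, a] @ lpow [b, b] m) = a # a # replicate (2*m - 1) b"
    using assms(3) by (simp add: lpow_pair butlast_append)
  with assms show ?thesis by (simp add: isin_eq_continuant)
qed

lemma tmax_opL_triple:
  assumes "0 < a" and "\<forall>x\<in>set xs. 0 < x"
  shows "tmax (int a, continuant (a # a # xs), continuant xs) = continuant (a # a # xs)"
proof -
  have "continuant xs \<le> continuant (a # xs)" and "continuant (a # xs) \<le> continuant (a # a # xs)"
    using assms by (auto intro!: continuant_le_Cons simp del: continuant.simps)
  moreover have "int a < continuant (a # a # xs)"
    using assms by (intro hd_less_continuant) auto
  ultimately show ?thesis
    by (simp add: tmax_def max_def del: continuant.simps)
qed

lemma tmax_opR_triple:
  assumes "0 < b" and "\<forall>x\<in>set xs. 0 < x"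
  shows "tmax (continuant xs, continuant (xs @ [b, b]), int b) = continuant (xs @ [b, b])"
proof -
  have "continuant xs \<le> continuant (xs @ [b])" and "continuant (xs @ [b]) \<le> continuant (xs @ [b, b])"
    using assms continuant_le_snoc[of b "xs @ [b]"] by (auto intro!: continuant_le_snoc)
  moreover have "int b < continuant (xs @ [b, b])"
    using assms by (intro last_less_continuant) auto
  ultimately show ?thesis
    by (simp add: tmax_def max_def)
qed

lemma tmax_eq_tmset_neq_triples:
  assumes "0 < a" and "a < b" and "\<forall>x\<in>set xs. 0 < x" and "\<forall>y\<in>set ys. 0 < y"
    and "continuant (a # a # xs) = continuant ((a # a # ys) @ [b, b])"
  defines "u \<equiv> (int a, continuant (a # a # xs), continuant xs)"
    and "v \<equiv> (continuant (a # a # ys), continuant ((a # a # ys) @ [b, b]), int b)"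
  shows "tmax u = tmax v" and "tmset u \<noteq> tmset v"
proof -
  show "tmax u = tmax v"
    using assms tmax_opL_triple[of a xs] tmax_opR_triple[of b "a # a # ys"] by simp
  have "int a < continuant (a # a # ys)" and "int a < continuant (a # a # (ys @ [b, b]))"
    using assms(1-4) by (intro hd_less_continuant; auto)+
  then have "int a \<notin># tmset v"
    using assms(2) by (auto simp: v_def tmset_def simp del: continuant.simps)
  moreover have "int a \<in># tmset u"
    by (simp add: u_def tmset_def)
  ultimately show "tmset u \<noteq> tmset v" by metis
qed

lemma triple_graph_verts_opL_chain:
  "(isin \<alpha>, isin (lpow \<alpha> (Suc m) @ \<beta>), isin (lpow \<alpha> m @ \<beta>)) \<in> triple_graph_verts \<alpha> \<beta>"
  unfolding triple_graph_verts_def using Gverts_opL_chain by (force simp: chi_def)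

lemma triple_graph_verts_opR_chain:
  "(isin (\<alpha> @ lpow \<beta> m), isin (\<alpha> @ lpow \<beta> (Suc m)), isin \<beta>) \<in> triple_graph_verts \<alpha> \<beta>"
  unfolding triple_graph_verts_def using Gverts_opR_chain by (force simp: chi_def)

theorem theorem1:
  fixes n j :: nat
  assumes "n \<ge> 1" and "j \<ge> 1"
  defines "t1 \<equiv> (isin (S0 n), isin (lpow (S0 n) (5*j+1) @ S1 n), isin (lpow (S0 n) (5*j) @ S1 n))"
      and "t2 \<equiv> (isin (S0 n @ lpow (S1 n) (3*j)), isin (S0 n @ lpow (S1 n) (3*j+1)), isin (S1 n))"
  shows "t1 \<in> T n \<and> t2 \<in> T n \<and> tmax t1 = tmax t2 \<and> t1 \<noteq> t2 \<and> tmset t1 \<noteq> tmset t2"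
proof -
  define s t where "s = n * an n" and "t = n * bn n"
  have s: "int s = int n * (int n^2 + 3)" and t: "int t = int n * (int n^4 + 5 * int n^2 + 5)"
    by (simp_all add: s_def t_def an_def bn_def)
  have "0 < s" and "s < t"
    using assms(1) by (auto simp: s_def t_def an_def bn_def intro!: mult_strict_left_mono)
  define R Q where "R = replicate (10*j) s @ [t]" and "Q = replicate (6*j - 1) t"
  have "S0 n = [s, s]" and "S1 n = [t, t]"
    by (simp_all add: S0_def S1_def s_def t_def)
  moreover have "Q @ [t, t] = replicate (6*j + 1) t"
  proof -
    have "6*j + 1 = (6*j - 1) + 2" using assms(2) by simp
    then show ?thesis unfolding Q_def by (simp only: replicate_add) (simp add: numeral_2_eq_2)
  qed
  ultimately have t1: "t1 = (int s, continuant (s # s # R), continuant R)"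
    and t2: "t2 = (continuant (s # s # Q), continuant ((s # s # Q) @ [t, t]), int t)"
    using isin_lpow_pair_append_pair[of s t] isin_pair_append_lpow_pair[of s t "3*j"]
      isin_pair_append_lpow_pair[of s t "3*j + 1"] \<open>0 < s\<close> \<open>s < t\<close> assms(2)
    by (simp_all add: t1_def t2_def R_def Q_def isin_pair del: continuant.simps)
  have "continuant (s # s # R) = continuant ((s # s # Q) @ [t, t])"
    using continuant_coincidence[OF s t, of j] \<open>Q @ [t, t] = _\<close> by (simp add: R_def)
  then have "tmax t1 = tmax t2" and "tmset t1 \<noteq> tmset t2"
    unfolding t1 t2 using \<open>0 < s\<close> \<open>s < t\<close>
    by (intro tmax_eq_tmset_neq_triples; auto simp: R_def Q_def)+
  moreover have "t1 \<in> T n" and "t2 \<in> T n"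
    unfolding t1_def t2_def T_def
    using triple_graph_verts_opL_chain triple_graph_verts_opR_chain by simp_all
  ultimately show ?thesis by auto
qed

end
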